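(* With $\mathsf{pure}\ x := \hat x$ and $\mathsf{ap}\ F\ x := F@x$, the step functions satisfy the applicative functor laws up to $\asymp_{\mathfrak{S}}$ (where the setoids of function types carry extensional equality): for all appropriately typed $u,v,w$ (step functions) and $f$, $x$, $y$ (values), (Identity) $\hat{\mathbf{I}} @ v \asymp v$; (Composition) $\hat{\mathbf{B}} @ u @ v @ w \asymp u @ (v @ w)$; (Homomorphism) $\hat f @ \hat x \asymp \widehat{f x}$; (Interchange) $u @ \hat y \asymp \widehat{\mathrm{ev}_y} @ u$, where $\mathbf{I}x := x$, $\mathbf{B}fgx := f(gx)$ and $\mathrm{ev}_y := \lambda f. f\,y$.
   Context: Step functions. For a type $X$, $\mathfrak{S}X$ is the inductive type of (formal, rational) step functions on $[0,1]$: it has the constructors $\mathsf{const}\ x$ for $x\in X$ (also written $\hat x$), and $\mathsf{glue}\ o\ f\ g$ for $o\in(0,1)\cap\mathbb{Q}$ and $f,g\in\mathfrak{S}X$. Split. For $a\in(0,1)\cap\mathbb{Q}$: $\mathsf{SplitL}\ \hat x\ a := \hat x$, $\mathsf{SplitR}\ \hat x\ a:=\hat x$, and $\mathsf{SplitL}(\mathsf{glue}\ o\ f_l\ f_r)\ a :=$ $\mathsf{SplitL}\ f_l\ (a/o)$ if $a<o$; $f_l$ if $a=o$; $\mathsf{glue}\ (o/a)\ f_l\ (\mathsf{SplitL}\ f_r\ \tfrac{a-o}{1-o})$ if $a>o$. $\mathsf{SplitR}(\mathsf{glue}\ o\ f_l\ f_r)\ a :=$ $\mathsf{glue}\ \tfrac{o-a}{1-a}\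 (\mathsf{SplitR}\ f_l\ (a/o))\ f_r$ if $a<o$; $f_r$ if $a=o$; $\mathsf{SplitR}\ f_r\ \tfrac{a-o}{1-o}$ if $a>o$. Map and ap. $\mathsf{map}\ \varphi\ \hat x := \widehat{\varphi x}$, $\mathsf{map}\ \varphi\ (\mathsf{glue}\ o\ f\ g):=\mathsf{glue}\ o\ (\mathsf{map}\ \varphi\ f)(\mathsf{map}\ \varphi\ g)$. For $F\in\mathfrak{S}(X\Rightarrow Y)$, $x\in\mathfrak{S}X$: $\hat\varphi @ x := \mathsf{map}\ \varphi\ x$, and $(\mathsf{glue}\ o\ F_l\ F_r) @ x := \mathsf{glue}\ o\ (F_l @ \mathsf{SplitL}\ x\ o)\ (F_r @ \mathsf{SplitR}\ x\ o)$. $@$ associates to the left. Write $f\{\circledast\}g := (\lambda u v. u\circledast v)\circ f @ g$ where $\varphi\circ x:=\mathsf{map}\ \varphi\ x$. Fold. $\mathsf{fold}\ \varphi\ \psi\ \hat x:=\varphi x$, $\mathsf{fold}\ \varphi\ \psi\ (\mathsf{glue}\ o\ f\ g) := \psi\ o\ (\mathsf{fold}\ \varphi\ \psi\ f)(\mathsf{fold}\ \varphi\ \psi\ g)$. $\mathsf{fold}_\star$ is $\mathsf{fold}\ \mathrm{id}\ (\lambda o\,p\,q.\ p\wedge q)$. Equivalence. For a setoid $X$ and $f,g\in\mathfrak{S}X$, $f\asymp_{\mathfrak{S}X} g := \mathsf{fold}_\star(f\{\asymp_X\}g)$. *)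

theory Defs
  imports Main "HOL.Rat"
begin

text \<open>Formal rational step functions on [0,1]. Glue points are rationals;
the constraint that they lie in the open interval (0,1) is imposed by the
well-formedness predicate wf_sf.\<close>

datatype 'a sf = Const 'a | Glue rat "'a sf" "'a sf"

fun wf_sf :: "'a sf \<Rightarrow> bool" where
  "wf_sf (Const x) = True"
| "wf_sf (Glue p f g) = (0 < p \<and> p < 1 \<and> wf_sf f \<and> wf_sf g)"

fun splitL :: "'a sf \<Rightarrow> rat \<Rightarrow> 'a sf" where
  "splitL (Const x) a = Const x"
| "splitL (Glue p fl fr) a =
     (if a < p then splitL fl (a / p)
      else if a = p then fl
      else Glue (p / a) fl (splitL fr ((a - p) / (1 - p))))"

fun splitR :: "'a sf \<Rightarrow> rat \<Rightarrow> 'a sf" where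
  "splitR (Const x) a = Const x"
| "splitR (Glue p fl fr) a =
     (if a < p then Glue ((p - a) / (1 - a)) (splitR fl (a / p)) fr
      else if a = p then fr
      else splitR fr ((a - p) / (1 - p)))"

fun smap :: "('a \<Rightarrow> 'b) \<Rightarrow> 'a sf \<Rightarrow> 'b sf" where
  "smap \<phi> (Const x) = Const (\<phi> x)"
| "smap \<phi> (Glue p f g) = Glue p (smap \<phi> f) (smap \<phi> g)"

fun sap :: "('a \<Rightarrow> 'b) sf \<Rightarrow> 'a sf \<Rightarrow> 'b sf" (infixl "@@" 65) where
  "sap (Const \<phi>) x = smap \<phi> x"
| "sap (Glue p Fl Fr) x = Glue p (sap Fl (splitL x p)) (sap Fr (splitR x p))"

fun sfold :: "('a \<Rightarrow> 'b) \<Rightarrow> (rat \<Rightarrow> 'b \<Rightarrow> 'b \<Rightarrow> 'b) \<Rightarrow> 'a sf \<Rightarrow> 'b" where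
  "sfold \<phi> \<psi> (Const x) = \<phi> x"
| "sfold \<phi> \<psi> (Glue p f g) = \<psi> p (sfold \<phi> \<psi> f) (sfold \<phi> \<psi> g)"

definition sfold_star :: "bool sf \<Rightarrow> bool" where
  "sfold_star = sfold id (\<lambda>p a b. a \<and> b)"

definition slift2 :: "('a \<Rightarrow> 'b \<Rightarrow> 'c) \<Rightarrow> 'a sf \<Rightarrow> 'b sf \<Rightarrow> 'c sf" where
  "slift2 op f g = sap (smap (\<lambda>u v. op u v) f) g"

definition sf_equiv :: "('a \<Rightarrow> 'a \<Rightarrow> bool) \<Rightarrow> 'a sf \<Rightarrow> 'a sf \<Rightarrow> bool" where
  "sf_equiv R f g = sfold_star (slift2 R f g)"

end

theory Submission
  imports Defs
begin

(* All four laws in fact hold as literal equalities of step functions, so the theorem follows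
   from reflexivity of the setoid equivalence sf_equiv.  Identity, homomorphism and interchange
   are immediate consequences of the defining equations of @@ and smap.  The composition law is
   the substantial part: proving it by induction on u requires that splitting commutes with
   application, splitL (F @@ x) a = splitL F a @@ splitL x a (and likewise for splitR).  That in
   turn rests on three "split-composition" laws describing how two successive splits of a step
   function at interior rational points combine into a single split; these are proved by
   induction on the step function with a case analysis on the position of the glue point,
   using two rational rescaling identities. *)

(* Renormalising x/z relative to the subinterval [y/z,1] is the same as renormalising x
   relative to [y,z]: the arithmetic of two successive right-hand rescalings. *)
lemma rescale_shift:
  fixes x y z :: "'a::field"
  assumes "z \<noteq> 0" "z \<noteq> y"
  shows "(x/z - y/z) / (1 - y/z) = (x - y) / (z - y)"
proof -
  have "x/z - y/z = (x - y)/z" by (simp add: diff_divide_distrib)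
  moreover have "1 - y/z = (z - y)/z" using assms by (simp add: field_simps)
  ultimately show ?thesis using assms by simp
qed

lemma rescale_common:
  fixes x y z :: "'a::field"
  assumes "y \<noteq> 1"
  shows "((x - y)/(1 - y)) / ((z - y)/(1 - y)) = (x - y)/(z - y)"
  using assms by simp

(* Restricting to [0,a] and then to the left part [0,b/a] of the rescaled interval is
   restricting to [0,b]. *)
lemma splitL_splitL:
  assumes "wf_sf x" "0 < b" "b < a" "a < 1"
  shows "splitL (splitL x a) (b/a) = splitL x b"
  using assms
proof (induction x arbitrary: a b)
  case (Const c)
  then show ?case by simp
next
  case (Glue p l r)
  then have p: "0 < p" "p < 1" by auto
  consider (left) "a \<le> p" | (middle) "b \<le> p" "p < a" | (right) "p < b"
    using Glue.prems by fastforce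
  then show ?case
  proof cases
    case left
    then show ?thesis
      using Glue.IH(1)[of "b/p" "a/p"] Glue.prems p
      by (auto simp: divide_less_cancel)
  next
    case middle
    then show ?thesis
      using Glue.prems p by (auto simp: divide_less_cancel)
  next
    case right
    then show ?thesis
      using Glue.IH(2)[of "(b-p)/(1-p)" "(a-p)/(1-p)"] Glue.prems p
      by (auto simp: divide_less_cancel rescale_shift)
  qed
qed

(* The middle piece [b,a] can be cut out in either order: right part of the left part, or
   left part of the right part, with the cut points rescaled accordingly. *)
lemma splitR_splitL:
  assumes "wf_sf x" "0 < b" "b < a" "a < 1"
  shows "splitR (splitL x a) (b/a) = splitL (splitR x b) ((a - b)/(1 - b))"
  using assms
proof (induction x arbitrary: a b)
  case (Const c)
  then show ?case by simp
next
  case (Glue p l r)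
  then have p: "0 < p" "p < 1" by auto
  consider (left) "a \<le> p" | (middle) "b \<le> p" "p < a" | (right) "p < b"
    using Glue.prems by fastforce
  then show ?case
  proof cases
    case left
    then show ?thesis
      using Glue.IH(1)[of "b/p" "a/p"] Glue.prems p
      by (auto simp: divide_less_cancel rescale_shift rescale_common)
  next
    case middle
    then show ?thesis
      using Glue.prems p by (auto simp: divide_less_cancel rescale_shift rescale_common)
  next
    case right
    then show ?thesis
      using Glue.IH(2)[of "(b-p)/(1-p)" "(a-p)/(1-p)"] Glue.prems p
      by (auto simp: divide_less_cancel rescale_shift rescale_common)
  qed
qed

(* Restricting to [a,1] and then to the right part beyond the rescaled b is restricting to
   [b,1]. *)
lemma splitR_splitR:
  assumes "wf_sf x" "0 < a" "a < b" "b < 1"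
  shows "splitR (splitR x a) ((b - a)/(1 - a)) = splitR x b"
  using assms
proof (induction x arbitrary: a b)
  case (Const c)
  then show ?case by simp
next
  case (Glue p l r)
  then have p: "0 < p" "p < 1" by auto
  consider (left) "b < p" | (middle) "a < p" "p \<le> b" | (right) "p \<le> a"
    using Glue.prems by fastforce
  then show ?case
  proof cases
    case left
    then show ?thesis
      using Glue.IH(1)[of "a/p" "b/p"] Glue.prems p
      by (auto simp: divide_less_cancel rescale_shift rescale_common)
  next
    case middle
    then show ?thesis
      using Glue.prems p by (auto simp: divide_less_cancel rescale_shift rescale_common)
  next
    case right
    then show ?thesis
      using Glue.IH(2)[of "(a-p)/(1-p)" "(b-p)/(1-p)"] Glue.prems p
      by (auto simp: divide_less_cancel rescale_shift rescale_common)
  qed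
qed

lemma wf_splitL: "wf_sf x \<Longrightarrow> 0 < a \<Longrightarrow> a < 1 \<Longrightarrow> wf_sf (splitL x a)"
  by (induction x arbitrary: a) (auto simp: field_simps)

lemma wf_splitR: "wf_sf x \<Longrightarrow> 0 < a \<Longrightarrow> a < 1 \<Longrightarrow> wf_sf (splitR x a)"
  by (induction x arbitrary: a) (auto simp: field_simps)

lemma splitL_smap: "splitL (smap \<phi> x) a = smap \<phi> (splitL x a)"
  by (induction x arbitrary: a) auto

lemma splitR_smap: "splitR (smap \<phi> x) a = smap \<phi> (splitR x a)"
  by (induction x arbitrary: a) auto

(* The glue point a of the result may fall left of,
   on, or right of the glue point p of F; the three split-composition laws above realign the
   two argument splits in each case. *)
lemma splitL_sap:
  assumes "wf_sf F" "wf_sf x" "0 < a" "a < 1"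
  shows "splitL (F @@ x) a = splitL F a @@ splitL x a"
  using assms
proof (induction F arbitrary: x a)
  case (Const \<phi>)
  then show ?case by (simp add: splitL_smap)
next
  case (Glue p Fl Fr)
  then have p: "0 < p" "p < 1" by auto
  consider (left) "a < p" | (at) "a = p" | (right) "p < a" by fastforce
  then show ?case
  proof cases
    case left
    then show ?thesis
      using Glue.IH(1)[of "splitL x p" "a/p"] Glue.prems p
      splitL_splitL[of x a p] by (simp add: wf_splitL)
  next
    case at
    then show ?thesis by simp
  next
    case right
    then show ?thesis
      using Glue.IH(2)[of "splitR x p" "(a-p)/(1-p)"] Glue.prems p
      splitL_splitL[of x p a] splitR_splitL[of x p a] by (simp add: wf_splitR field_simps)
  qed
qed

lemma splitR_sap:
  assumes "wf_sf F" "wf_sf x" "0 < a" "a < 1"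
  shows "splitR (F @@ x) a = splitR F a @@ splitR x a"
  using assms
proof (induction F arbitrary: x a)
  case (Const \<phi>)
  then show ?case by (simp add: splitR_smap)
next
  case (Glue p Fl Fr)
  then have p: "0 < p" "p < 1" by auto
  consider (left) "a < p" | (at) "a = p" | (right) "p < a" by fastforce
  then show ?case
  proof cases
    case left
    then show ?thesis
      using Glue.IH(1)[of "splitL x p" "a/p"] Glue.prems p
      splitR_splitL[of x a p] splitR_splitR[of x a p] by (simp add: wf_splitL)
  next
    case at
    then show ?thesis by simp
  next
    case right
    then show ?thesis
      using Glue.IH(2)[of "splitR x p" "(a-p)/(1-p)"] Glue.prems p
      splitR_splitR[of x p a] by (simp add: wf_splitR field_simps)
  qed
qed

lemma smap_ident: "smap (\<lambda>z. z) v = v"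
  by (induction v) auto

lemma smap_smap: "smap \<phi> (smap g w) = smap (\<lambda>z. \<phi> (g z)) w"
  by (induction w) auto

lemma sap_smap_comp: "smap (\<lambda>g z. \<phi> (g z)) v @@ w = smap \<phi> (v @@ w)"
  by (induction v arbitrary: w) (auto simp: smap_smap)

lemma sap_composition:
  assumes "wf_sf u" "wf_sf v" "wf_sf w"
  shows "smap (\<lambda>f g z. f (g z)) u @@ v @@ w = u @@ (v @@ w)"
  using assms
proof (induction u arbitrary: v w)
  case (Const \<phi>)
  then show ?case by (simp add: sap_smap_comp)
next
  case (Glue p ul ur)
  then have p: "0 < p" "p < 1" by auto
  with Glue show ?case
    by (simp add: splitL_sap splitR_sap wf_splitL wf_splitR)
qed

lemma sap_Const_right: "u @@ Const y = smap (\<lambda>h. h y) u"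
  by (induction u) auto

(* Applying a mapped copy of f to f itself never splits a piece: the glue points coincide. *)
lemma sap_diagonal: "smap \<phi> f @@ f = smap (\<lambda>z. \<phi> z z) f"
  by (induction f) auto

lemma sfold_star_smap_true: "(\<And>z. P z) \<Longrightarrow> sfold_star (smap P f)"
  by (induction f) (auto simp: sfold_star_def)

lemma sf_equiv_refl: "reflp R \<Longrightarrow> sf_equiv R f f"
  by (simp add: sf_equiv_def slift2_def sap_diagonal sfold_star_smap_true reflpD)

(* The four applicative laws hold as equalities, hence up to sf_equiv by reflexivity. *)
theorem mainTheorem4:
  fixes R1 :: "'a \<Rightarrow> 'a \<Rightarrow> bool"
    and R2 :: "'c \<Rightarrow> 'c \<Rightarrow> bool"
    and R3 :: "'e \<Rightarrow> 'e \<Rightarrow> bool"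
    and R4 :: "'h \<Rightarrow> 'h \<Rightarrow> bool"
    and v :: "'a sf"
    and u :: "('b \<Rightarrow> 'c) sf" and v2 :: "('bb \<Rightarrow> 'b) sf" and w :: "'bb sf"
    and f :: "'d \<Rightarrow> 'e" and x :: "'d"
    and u4 :: "('g \<Rightarrow> 'h) sf" and y :: "'g"
  assumes "equivp R1" and "equivp R2" and "equivp R3" and "equivp R4"
    and "wf_sf v" and "wf_sf u" and "wf_sf v2" and "wf_sf w" and "wf_sf u4"
  shows "sf_equiv R1 (Const (\<lambda>z. z) @@ v) v
    \<and> sf_equiv R2 (Const (\<lambda>f g z. f (g z)) @@ u @@ v2 @@ w) (u @@ (v2 @@ w))
    \<and> sf_equiv R3 (Const f @@ Const x) (Const (f x))
    \<and> sf_equiv R4 (u4 @@ Const y) (Const (\<lambda>h. h y) @@ u4)"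
proof -
  have identity: "Const (\<lambda>z. z) @@ v = v"
    by (simp add: smap_ident)
  have composition: "Const (\<lambda>f g z. f (g z)) @@ u @@ v2 @@ w = u @@ (v2 @@ w)"
    using sap_composition[OF \<open>wf_sf u\<close> \<open>wf_sf v2\<close> \<open>wf_sf w\<close>] by simp
  have homomorphism: "Const f @@ Const x = Const (f x)"
    by simp
  have interchange: "u4 @@ Const y = Const (\<lambda>h. h y) @@ u4"
    by (simp add: sap_Const_right)
  have "reflp R1" "reflp R2" "reflp R3" "reflp R4"
    using assms(1-4) by (simp_all add: equivp_reflp_symp_transp)
  then show ?thesis
    unfolding identity composition homomorphism interchange by (simp add: sf_equiv_refl)
qed

end
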